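(* Let $\varphi$ be an $AB\bar B$-formula and let $\mathcal{G}=(\mathbb{P}_N,\mathcal{L})$ be a $\varphi$-compass structure of finite length $N<\omega$ such that $\varphi\in\mathcal{L}(0,y)$ for some $0<y<N$. If there exist rows $0<y_0<y_1<N$ with $Shading_{\mathcal{G}}(y_0)\subseteq Shading_{\mathcal{G}}(y_1)$, then there exists a $\varphi$-compass structure $\mathcal{G}'$ of length $N'<N$ that features $\varphi$.
   Context: $AB\bar B$-formulas are built from propositional variables using $\neg$, $\vee$, and unary modalities $\langle A\rangle,\langle B\rangle,\langle\bar B\rangle$ ($[R]\psi=\neg\langle R\rangle\neg\psi$). The closure $Cl(\varphi)$ is the set of subformulas of $\varphi$ and their negations (identifying $\neg\neg\alpha$ with $\alpha$, $\neg\langle R\rangle\alpha$ with $[R]\neg\alpha$). The extended closure $Cl^+(\varphi)$ is $Cl(\varphi)$ together with all $\langle R\rangle\alpha$ and $\neg\langle R\rangle\alpha$ for $R\in\{A,B,\bar B\}$, $\alpha\in Cl(\varphi)$. A $\varphi$-atom is a nonempty $F\subseteq Cl^+(\varphi)$ such that for every $\alpha\in Cl^+(\varphi)$, $\alpha\in F$ iff $\neg\alpha\notin F$, and for every $\alpha\vee\beta\in Cl^+(\varphi)$, $\alpha\vee\beta\in F$ iff $\alpha\in F$ or $\beta\in F$. For an atom $F$: $obs(F)=\{\alpha\in Cl(\varphi):\alpha\in F\}$ and $Req_R(F)=\{\alpha\in Cl(\varphi):\langle R\rangle\alpha\in F\}$. Define $F\leadsto_A G$ iff $Req_A(F)=obs(G)\cup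 Req_B(G)\cup Req_{\bar B}(G)$; and $F\leadsto_B G$ iff $obs(F)\cup Req_{\bar B}(F)\subseteq Req_{\bar B}(G)\subseteq obs(F)\cup Req_{\bar B}(F)\cup Req_B(F)$ and $obs(G)\cup Req_B(G)\subseteq Req_B(F)\subseteq obs(G)\cup Req_B(G)\cup Req_{\bar B}(G)$. For $N\le\omega$ (identified with $\{0,\dots,N-1\}$), $\mathbb{P}_N=\{(x,y):0\le x<y<N\}$, with relations $(x,y)\,A\,(x',y')$ iff $y=x'$; $(x,y)\,B\,(x',y')$ iff $x=x'$ and $y'<y$; $(x,y)\,\bar B\,(x',y')$ iff $x=x'$ and $y<y'$. A $\varphi$-compass structure of length $N$ is $\mathcal{G}=(\mathbb{P}_N,\mathcal{L})$ with $\mathcal{L}$ mapping points to $\varphi$-atoms such that (consistency) $p\,R\,q$ implies $\mathcal{L}(p)\leadsto_R\mathcal{L}(q)$ for $R\in\{A,B\}$, and (fulfillment) for every $p$, $R\in\{A,B,\bar B\}$, $\alpha\in Req_R(\mathcal{L}(p))$ there is $q$ with $p\,R\,q$ and $\alpha\in obs(\mathcal{L}(q))$. $\mathcal{G}$ features $\alpha$ if $\alpha\in\mathcal{L}(p)$ for some point $p$. The shading of row $y$ is $Shading_{\mathcal{G}}(y)=\{\mathcal{L}(x,y):0\le x<y\}$. *)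

theory Defs
  imports Main
begin

datatype rel = RA | RB | RBbar

datatype 'p fm = Var 'p | Neg "'p fm" | Or "'p fm" "'p fm" | Dia rel "'p fm"

text \<open>Formulas are taken modulo the identification of double negations with their body.
  Canonical representatives are formulas without double negations; dnorm computes them.\<close>

fun nneg :: "'p fm \<Rightarrow> 'p fm" where
  "nneg (Neg a) = a"
| "nneg a = Neg a"

fun dnorm :: "'p fm \<Rightarrow> 'p fm" where
  "dnorm (Var p) = Var p"
| "dnorm (Neg a) = nneg (dnorm a)"
| "dnorm (Or a b) = Or (dnorm a) (dnorm b)"
| "dnorm (Dia r a) = Dia r (dnorm a)"

fun subf :: "'p fm \<Rightarrow> 'p fm set" where
  "subf (Var p) = {Var p}"
| "subf (Neg a) = insert (Neg a) (subf a)"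
| "subf (Or a b) = insert (Or a b) (subf a \<union> subf b)"
| "subf (Dia r a) = insert (Dia r a) (subf a)"

definition Cl :: "'p fm \<Rightarrow> 'p fm set" where
  "Cl \<phi> = subf (dnorm \<phi>) \<union> nneg ` subf (dnorm \<phi>)"

definition ClPlus :: "'p fm \<Rightarrow> 'p fm set" where
  "ClPlus \<phi> = Cl \<phi> \<union> {Dia r a | r a. a \<in> Cl \<phi>} \<union> {Neg (Dia r a) | r a. a \<in> Cl \<phi>}"

definition is_atom :: "'p fm \<Rightarrow> 'p fm set \<Rightarrow> bool" where
  "is_atom \<phi> F \<longleftrightarrow> F \<noteq> {} \<and> F \<subseteq> ClPlus \<phi>
     \<and> (\<forall>a \<in> ClPlus \<phi>. a \<in> F \<longleftrightarrow> nneg a \<notin> F)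
     \<and> (\<forall>a b. Or a b \<in> ClPlus \<phi> \<longrightarrow> (Or a b \<in> F \<longleftrightarrow> a \<in> F \<or> b \<in> F))"

definition obs :: "'p fm \<Rightarrow> 'p fm set \<Rightarrow> 'p fm set" where
  "obs \<phi> F = {a \<in> Cl \<phi>. a \<in> F}"

definition Req :: "'p fm \<Rightarrow> rel \<Rightarrow> 'p fm set \<Rightarrow> 'p fm set" where
  "Req \<phi> r F = {a \<in> Cl \<phi>. Dia r a \<in> F}"

definition leadsto_A :: "'p fm \<Rightarrow> 'p fm set \<Rightarrow> 'p fm set \<Rightarrow> bool" where
  "leadsto_A \<phi> F G \<longleftrightarrow> Req \<phi> RA F = obs \<phi> G \<union> Req \<phi> RB G \<union> Req \<phi> RBbar G"

definition leadsto_B :: "'p fm \<Rightarrow> 'p fm set \<Rightarrow> 'p fm set \<Rightarrow> bool" where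
  "leadsto_B \<phi> F G \<longleftrightarrow>
     obs \<phi> F \<union> Req \<phi> RBbar F \<subseteq> Req \<phi> RBbar G
   \<and> Req \<phi> RBbar G \<subseteq> obs \<phi> F \<union> Req \<phi> RBbar F \<union> Req \<phi> RB F
   \<and> obs \<phi> G \<union> Req \<phi> RB G \<subseteq> Req \<phi> RB F
   \<and> Req \<phi> RB F \<subseteq> obs \<phi> G \<union> Req \<phi> RB G \<union> Req \<phi> RBbar G"

definition PN :: "nat \<Rightarrow> (nat \<times> nat) set" where
  "PN N = {(x, y). x < y \<and> y < N}"

fun interval_rel :: "rel \<Rightarrow> nat \<times> nat \<Rightarrow> nat \<times> nat \<Rightarrow> bool" where
  "interval_rel RA (x, y) (x', y') \<longleftrightarrow> y = x'"
| "interval_rel RB (x, y) (x', y') \<longleftrightarrow> x = x' \<and> y' < y"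
| "interval_rel RBbar (x, y) (x', y') \<longleftrightarrow> x = x' \<and> y < y'"

definition compass :: "'p fm \<Rightarrow> nat \<Rightarrow> (nat \<times> nat \<Rightarrow> 'p fm set) \<Rightarrow> bool" where
  "compass \<phi> N L \<longleftrightarrow>
     (\<forall>p \<in> PN N. is_atom \<phi> (L p))
   \<and> (\<forall>p \<in> PN N. \<forall>q \<in> PN N. interval_rel RA p q \<longrightarrow> leadsto_A \<phi> (L p) (L q))
   \<and> (\<forall>p \<in> PN N. \<forall>q \<in> PN N. interval_rel RB p q \<longrightarrow> leadsto_B \<phi> (L p) (L q))
   \<and> (\<forall>p \<in> PN N. \<forall>r. \<forall>a \<in> Req \<phi> r (L p).
        \<exists>q \<in> PN N. interval_rel r p q \<and> a \<in> obs \<phi> (L q))"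

definition features :: "nat \<Rightarrow> (nat \<times> nat \<Rightarrow> 'p fm set) \<Rightarrow> 'p fm \<Rightarrow> bool" where
  "features N L \<psi> \<longleftrightarrow> (\<exists>p \<in> PN N. dnorm \<psi> \<in> L p)"

definition shading :: "(nat \<times> nat \<Rightarrow> 'p fm set) \<Rightarrow> nat \<Rightarrow> 'p fm set set" where
  "shading L y = {L (x, y) | x. x < y}"

end

theory Submission
  imports Defs
begin

(* We delete the rows y0+1, ..., y1: the new
   structure of length N - (y1 - y0) agrees with L up to row y0, and its row
   y > y0 is the old row y + (y1 - y0), where a column x < y0 is read from a
   column of row y1 carrying the same atom as (x, y0) (it exists by the shading
   inclusion), and a column x \<ge> y0 is shifted by y1 - y0.

   The key invariant is the
   column type obs \<union> Req_B \<union> Req_Bbar, which is constant along a column and is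
   all that A-consistency sees of the target atom. *)

section \<open>Column types and the consistency relations\<close>

(* The part of an atom that is visible to A-consistency; B-consistency keeps it fixed. *)
definition col_type :: "'p fm \<Rightarrow> 'p fm set \<Rightarrow> 'p fm set" where
  "col_type \<phi> F = obs \<phi> F \<union> Req \<phi> RB F \<union> Req \<phi> RBbar F"

lemma leadsto_B_trans: "leadsto_B \<phi> F G \<Longrightarrow> leadsto_B \<phi> G H \<Longrightarrow> leadsto_B \<phi> F H"
  unfolding leadsto_B_def by blast

lemma leadsto_B_col_type: "leadsto_B \<phi> F G \<Longrightarrow> col_type \<phi> F = col_type \<phi> G"
  unfolding leadsto_B_def col_type_def by blast

lemma leadsto_A_col_type:
  "leadsto_A \<phi> F G \<Longrightarrow> col_type \<phi> G = col_type \<phi> G' \<Longrightarrow> leadsto_A \<phi> F G'"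
  unfolding leadsto_A_def col_type_def by simp

lemma dnorm_in_Cl: "dnorm \<phi> \<in> Cl \<phi>"
proof -
  have "dnorm \<phi> \<in> subf (dnorm \<phi>)" by (cases "dnorm \<phi>") auto
  then show ?thesis by (simp add: Cl_def)
qed

section \<open>Compass structures in coordinates\<close>

(* Introduction rule: A-fulfilment need not be checked separately; at a point (x,y)
   below the top row, A-consistency with (y, y+1) turns an A-request into an
   observable, B-request or Bbar-request of (y, y+1), which is then fulfilled in
   column y. *)
lemma compassI:
  assumes atom: "\<And>x y. x < y \<Longrightarrow> y < N \<Longrightarrow> is_atom \<phi> (L (x, y))"
    and cons_A: "\<And>x y e. x < y \<Longrightarrow> y < e \<Longrightarrow> e < N \<Longrightarrow> leadsto_A \<phi> (L (x, y)) (L (y, e))"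
    and cons_B: "\<And>x y e. x < e \<Longrightarrow> e < y \<Longrightarrow> y < N \<Longrightarrow> leadsto_B \<phi> (L (x, y)) (L (x, e))"
    and ful_B: "\<And>x y a. x < y \<Longrightarrow> y < N \<Longrightarrow> a \<in> Req \<phi> RB (L (x, y)) \<Longrightarrow>
                  \<exists>e. x < e \<and> e < y \<and> a \<in> obs \<phi> (L (x, e))"
    and ful_Bbar: "\<And>x y a. x < y \<Longrightarrow> y < N \<Longrightarrow> a \<in> Req \<phi> RBbar (L (x, y)) \<Longrightarrow>
                  \<exists>e. y < e \<and> e < N \<and> a \<in> obs \<phi> (L (x, e))"
    and top_A: "\<And>x. x < N - 1 \<Longrightarrow> Req \<phi> RA (L (x, N - 1)) = {}"
  shows "compass \<phi> N L"
proof -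
  have ful_A: "\<exists>e. y < e \<and> e < N \<and> a \<in> obs \<phi> (L (y, e))"
    if xy: "x < y" "y < N" and a: "a \<in> Req \<phi> RA (L (x, y))" for x y a
  proof (cases "Suc y < N")
    case True
    have "a \<in> col_type \<phi> (L (y, Suc y))"
      using cons_A[OF xy(1) _ True] a unfolding leadsto_A_def col_type_def by simp
    then consider "a \<in> obs \<phi> (L (y, Suc y))" | "a \<in> Req \<phi> RB (L (y, Suc y))"
      | "a \<in> Req \<phi> RBbar (L (y, Suc y))" unfolding col_type_def by blast
    then show ?thesis
    proof cases
      case 2 then show ?thesis using ful_B[of y "Suc y" a] True by auto
    next
      case 3 then show ?thesis using ful_Bbar[of y "Suc y" a] True by (auto dest: Suc_lessD)
    qed (use True in blast)
  next
    case False
    then have "y = N - 1" using xy by simp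
    then show ?thesis using top_A[of x] xy a by simp
  qed
  show ?thesis
    unfolding compass_def
  proof (intro conjI ballI allI impI)
    fix p assume "p \<in> PN N"
    then show "is_atom \<phi> (L p)" using atom by (cases p) (auto simp: PN_def)
  next
    fix p q assume "p \<in> PN N" "q \<in> PN N" "interval_rel RA p q"
    then show "leadsto_A \<phi> (L p) (L q)" using cons_A by (cases p; cases q) (auto simp: PN_def)
  next
    fix p q assume "p \<in> PN N" "q \<in> PN N" "interval_rel RB p q"
    then show "leadsto_B \<phi> (L p) (L q)" using cons_B by (cases p; cases q) (auto simp: PN_def)
  next
    fix p r a assume p: "p \<in> PN N" and a: "a \<in> Req \<phi> r (L p)"
    obtain x y where p_eq: "p = (x, y)" and xy: "x < y" "y < N"
      using p by (cases p) (auto simp: PN_def)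
    show "\<exists>q\<in>PN N. interval_rel r p q \<and> a \<in> obs \<phi> (L q)"
    proof (cases r)
      case RA
      then obtain e where "y < e" "e < N" "a \<in> obs \<phi> (L (y, e))" using ful_A[OF xy] a p_eq by auto
      then show ?thesis using RA p_eq xy by (intro bexI[of _ "(y, e)"]) (auto simp: PN_def)
    next
      case RB
      then obtain e where "x < e" "e < y" "a \<in> obs \<phi> (L (x, e))" using ful_B[OF xy] a p_eq by auto
      then show ?thesis using RB p_eq xy by (intro bexI[of _ "(x, e)"]) (auto simp: PN_def)
    next
      case RBbar
      then obtain e where "y < e" "e < N" "a \<in> obs \<phi> (L (x, e))" using ful_Bbar[OF xy] a p_eq by auto
      then show ?thesis using RBbar p_eq xy by (intro bexI[of _ "(x, e)"]) (auto simp: PN_def)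
    qed
  qed
qed

context
  fixes \<phi> :: "'p fm" and N :: nat and L :: "nat \<times> nat \<Rightarrow> 'p fm set"
  assumes G: "compass \<phi> N L"
begin

lemma compass_atom: "x < y \<Longrightarrow> y < N \<Longrightarrow> is_atom \<phi> (L (x, y))"
  using G by (auto simp: compass_def PN_def)

lemma compass_A: "x < y \<Longrightarrow> y < e \<Longrightarrow> e < N \<Longrightarrow> leadsto_A \<phi> (L (x, y)) (L (y, e))"
  using G unfolding compass_def PN_def by fastforce

lemma compass_B: "x < e \<Longrightarrow> e < y \<Longrightarrow> y < N \<Longrightarrow> leadsto_B \<phi> (L (x, y)) (L (x, e))"
  using G unfolding compass_def PN_def by fastforce

lemma compass_fulfil:
  "x < y \<Longrightarrow> y < N \<Longrightarrow> a \<in> Req \<phi> r (L (x, y)) \<Longrightarrow>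
     \<exists>q\<in>PN N. interval_rel r (x, y) q \<and> a \<in> obs \<phi> (L q)"
  using G unfolding compass_def by (auto simp: PN_def)

lemma compass_ful_B:
  "x < y \<Longrightarrow> y < N \<Longrightarrow> a \<in> Req \<phi> RB (L (x, y)) \<Longrightarrow> \<exists>e. x < e \<and> e < y \<and> a \<in> obs \<phi> (L (x, e))"
  using compass_fulfil[of x y a RB] by (auto simp: PN_def)

lemma compass_ful_Bbar:
  "x < y \<Longrightarrow> y < N \<Longrightarrow> a \<in> Req \<phi> RBbar (L (x, y)) \<Longrightarrow> \<exists>e. y < e \<and> e < N \<and> a \<in> obs \<phi> (L (x, e))"
  using compass_fulfil[of x y a RBbar] by (auto simp: PN_def)

(* Nothing lies to the right of the top row, so it carries no A-requests. *)
lemma compass_top_A: "x < N - 1 \<Longrightarrow> Req \<phi> RA (L (x, N - 1)) = {}"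
  using compass_fulfil[of x "N - 1" _ RA] by (fastforce simp: PN_def)

lemma compass_col_type:
  assumes "x < y" "y < N" "x < y'" "y' < N"
  shows "col_type \<phi> (L (x, y)) = col_type \<phi> (L (x, y'))"
proof -
  consider "y = y'" | "y' < y" | "y < y'" by linarith
  then show ?thesis
    by cases (use assms compass_B leadsto_B_col_type in metis)+
qed

end

section \<open>Deleting the rows between y0 and y1\<close>

locale row_contraction =
  fixes \<phi> :: "'p fm" and N y0 y1 :: nat and L :: "nat \<times> nat \<Rightarrow> 'p fm set"
  assumes G: "compass \<phi> N L" and y0_y1: "y0 < y1" and y1_N: "y1 < N"
    and shading_incl: "shading L y0 \<subseteq> shading L y1"
begin

abbreviation "d \<equiv> y1 - y0"

(* Where column x of the new structure is read off above row y0. *)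
definition col :: "nat \<Rightarrow> nat" where
  "col x = (if x < y0 then (SOME x'. x' < y1 \<and> L (x', y1) = L (x, y0)) else x + d)"

definition Nc :: nat where "Nc = N - d"

definition Lc :: "nat \<times> nat \<Rightarrow> 'p fm set" where
  "Lc p = (if snd p \<le> y0 then L p else L (col (fst p), snd p + d))"

lemma col_low: assumes "x < y0" shows "col x < y1" and "L (col x, y1) = L (x, y0)"
proof -
  have "L (x, y0) \<in> shading L y1" using shading_incl assms by (auto simp: shading_def)
  then have "\<exists>x'. x' < y1 \<and> L (x', y1) = L (x, y0)" by (auto simp: shading_def)
  from someI_ex[OF this] show "col x < y1" "L (col x, y1) = L (x, y0)"
    using assms by (auto simp: col_def)
qed

lemma col_high: "\<not> x < y0 \<Longrightarrow> col x = x + d"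
  by (simp add: col_def)

lemma col_less: "x < y \<Longrightarrow> y0 < y \<Longrightarrow> col x < y + d"
  using col_low[of x] col_high[of x] y0_y1 by (cases "x < y0") auto

lemma Lc_low: "y \<le> y0 \<Longrightarrow> Lc (x, y) = L (x, y)"
  by (simp add: Lc_def)

lemma Lc_high: "y0 < y \<Longrightarrow> Lc (x, y) = L (col x, y + d)"
  by (simp add: Lc_def)

lemma Nc_bounds: "Nc < N" "y0 < Nc"
  using y0_y1 y1_N by (auto simp: Nc_def)

lemma Lc_atom: "x < y \<Longrightarrow> y < Nc \<Longrightarrow> is_atom \<phi> (Lc (x, y))"
  using compass_atom[OF G, of x y] compass_atom[OF G, of "col x" "y + d"] col_less[of x y] Nc_bounds
  by (cases "y \<le> y0") (auto simp: Lc_low Lc_high Nc_def)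

(* The interesting case is y < y0 < e: the target is (col y, e + d) instead of
   (y, y0); both lie in columns whose types agree at row y1 by the choice of col. *)
lemma Lc_cons_A:
  assumes xye: "x < y" "y < e" "e < Nc"
  shows "leadsto_A \<phi> (Lc (x, y)) (Lc (y, e))"
proof -
  have e_N: "e + d < N" using xye by (simp add: Nc_def)
  consider "e \<le> y0" | "y < y0" "y0 < e" | "y = y0" "y0 < e" | "y0 < y" by linarith
  then show ?thesis
  proof cases
    case 1 then show ?thesis using xye compass_A[OF G, of x y e] y1_N y0_y1 by (simp add: Lc_low)
  next
    case 2
    have "leadsto_A \<phi> (L (x, y)) (L (y, y0))" using compass_A[OF G, of x y y0] xye 2 y0_y1 y1_N by simp
    moreover have "col_type \<phi> (L (y, y0)) = col_type \<phi> (L (col y, e + d))"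
      using col_low[of y] 2 compass_col_type[OF G, of "col y" y1 "e + d"] e_N y0_y1 by simp
    ultimately show ?thesis using 2 xye by (simp add: Lc_low Lc_high leadsto_A_col_type)
  next
    case 3
    then show ?thesis
      using xye col_low[of x] col_high[of y0] compass_A[OF G, of "col x" y1 "e + d"] e_N y0_y1
      by (simp add: Lc_low Lc_high)
  next
    case 4
    then show ?thesis
      using xye col_less[of x y] col_high[of y] compass_A[OF G, of "col x" "y + d" "e + d"] e_N
      by (simp add: Lc_high)
  qed
qed

(* Crossing row y0 downwards: (col x, y + d) B-leads to (col x, y1), which carries
   the atom of (x, y0). *)
lemma Lc_cons_B:
  assumes xey: "x < e" "e < y" "y < Nc"
  shows "leadsto_B \<phi> (Lc (x, y)) (Lc (x, e))"
proof -
  have y_N: "y + d < N" using xey by (simp add: Nc_def)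
  consider "y \<le> y0" | "y0 < e" | "e \<le> y0" "y0 < y" by linarith
  then show ?thesis
  proof cases
    case 1 then show ?thesis using xey compass_B[OF G, of x e y] y1_N y0_y1 by (simp add: Lc_low)
  next
    case 2
    then show ?thesis using xey col_less[of x e] compass_B[OF G, of "col x" "e + d" "y + d"] y_N
      by (simp add: Lc_high)
  next
    case 3
    then have x: "x < y0" using xey by simp
    have to_y0: "leadsto_B \<phi> (L (col x, y + d)) (L (x, y0))"
      using col_low[OF x] compass_B[OF G, of "col x" y1 "y + d"] y_N 3 y0_y1 by simp
    show ?thesis
    proof (cases "e = y0")
      case True then show ?thesis using to_y0 3 by (simp add: Lc_low Lc_high)
    next
      case False
      then have "leadsto_B \<phi> (L (x, y0)) (L (x, e))"
        using compass_B[OF G, of x e y0] xey 3 y0_y1 y1_N by simp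
      then show ?thesis using to_y0 3 leadsto_B_trans by (simp add: Lc_low Lc_high) blast
    qed
  qed
qed

(* A B-request above row y0 is fulfilled either above y0 (shift back), at y0
   (the witness is row y1 itself) or inside the deleted band, in which case it
   already was a B-request of (x, y0) and is fulfilled below y0. *)
lemma Lc_ful_B:
  assumes xy: "x < y" "y < Nc" and a: "a \<in> Req \<phi> RB (Lc (x, y))"
  shows "\<exists>e. x < e \<and> e < y \<and> a \<in> obs \<phi> (Lc (x, e))"
proof (cases "y \<le> y0")
  case True
  then obtain e where "x < e" "e < y" "a \<in> obs \<phi> (L (x, e))"
    using compass_ful_B[OF G, of x y a] xy a y0_y1 y1_N by (auto simp: Lc_low)
  then show ?thesis using True by (intro exI[of _ e]) (simp add: Lc_low)
next
  case above: False
  have y_N: "y + d < N" using xy by (simp add: Nc_def)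
  obtain z where z: "col x < z" "z < y + d" "a \<in> obs \<phi> (L (col x, z))"
    using compass_ful_B[OF G, of "col x" "y + d" a] xy a above col_less[of x y] y_N
    by (auto simp: Lc_high)
  show ?thesis
  proof (cases "y1 < z")
    case True
    have "x < z - d" using col_low[of x] col_high[of x] True z y0_y1 by (cases "x < y0") auto
    then show ?thesis using True z y0_y1 by (intro exI[of _ "z - d"]) (simp add: Lc_high)
  next
    case z_le: False
    have x: "x < y0" using col_high[of x] z z_le y0_y1 by (cases "x < y0") auto
    show ?thesis
    proof (cases "z = y1")
      case True then show ?thesis using x z col_low[OF x] above
        by (intro exI[of _ y0]) (simp add: Lc_low)
    next
      case False
      have "leadsto_B \<phi> (L (col x, y1)) (L (col x, z))"
        using compass_B[OF G, of "col x" z y1] z z_le False y1_N by simp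
      then have "a \<in> Req \<phi> RB (L (x, y0))" using z col_low[OF x] unfolding leadsto_B_def by auto
      then obtain e where "x < e" "e < y0" "a \<in> obs \<phi> (L (x, e))"
        using compass_ful_B[OF G, of x y0 a] x y0_y1 y1_N by auto
      then show ?thesis using above by (intro exI[of _ e]) (simp add: Lc_low)
    qed
  qed
qed

(* Bbar-requests of a point (x, y0) are fulfilled above y0 in the new structure,
   since (col x, y1) carries the same atom. *)
lemma Lc_ful_Bbar_at_y0:
  assumes x: "x < y0" and a: "a \<in> Req \<phi> RBbar (L (x, y0))"
  shows "\<exists>e. y0 < e \<and> e < Nc \<and> a \<in> obs \<phi> (Lc (x, e))"
proof -
  obtain z where z: "y1 < z" "z < N" "a \<in> obs \<phi> (L (col x, z))"
    using compass_ful_Bbar[OF G, of "col x" y1 a] col_low[OF x] a y1_N by auto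
  then show ?thesis using y0_y1 by (intro exI[of _ "z - d"]) (auto simp: Lc_high Nc_def)
qed

lemma Lc_ful_Bbar:
  assumes xy: "x < y" "y < Nc" and a: "a \<in> Req \<phi> RBbar (Lc (x, y))"
  shows "\<exists>e. y < e \<and> e < Nc \<and> a \<in> obs \<phi> (Lc (x, e))"
proof -
  consider "y0 < y" | "y = y0" | "y < y0" by linarith
  then show ?thesis
  proof cases
    case 1
    have y_N: "y + d < N" using xy by (simp add: Nc_def)
    obtain z where z: "y + d < z" "z < N" "a \<in> obs \<phi> (L (col x, z))"
      using compass_ful_Bbar[OF G, of "col x" "y + d" a] xy a 1 col_less[of x y] y_N
      by (auto simp: Lc_high)
    then show ?thesis using 1 y0_y1 by (intro exI[of _ "z - d"]) (auto simp: Lc_high Nc_def)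
  next
    case 2 then show ?thesis using Lc_ful_Bbar_at_y0 xy a by (simp add: Lc_low)
  next
    case 3
    obtain z where z: "y < z" "z < N" "a \<in> obs \<phi> (L (x, z))"
      using compass_ful_Bbar[OF G, of x y a] xy a 3 y0_y1 y1_N by (auto simp: Lc_low)
    show ?thesis
    proof (cases "z \<le> y0")
      case True then show ?thesis using z Nc_bounds by (intro exI[of _ z]) (simp add: Lc_low)
    next
      case False
      have "leadsto_B \<phi> (L (x, z)) (L (x, y0))" using compass_B[OF G, of x y0 z] xy 3 z False by simp
      then have "a \<in> Req \<phi> RBbar (L (x, y0))" using z unfolding leadsto_B_def by auto
      moreover have "x < y0" using xy 3 by simp
      ultimately obtain e where "y0 < e" "e < Nc" "a \<in> obs \<phi> (Lc (x, e))"
        using Lc_ful_Bbar_at_y0 by blast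
      then show ?thesis using 3 by (intro exI[of _ e]) simp
    qed
  qed
qed

(* The new top row consists of atoms of the old top row. *)
lemma Lc_top_A:
  assumes x: "x < Nc - 1"
  shows "Req \<phi> RA (Lc (x, Nc - 1)) = {}"
proof -
  have same_label: "Lc (x, Nc - 1) = L (col x, N - 1)"
  proof (cases "Nc - 1 \<le> y0")
    case True
    then have "Nc - 1 = y0" "N - 1 = y1" "x < y0" using x Nc_bounds y0_y1 y1_N by (auto simp: Nc_def)
    then show ?thesis using col_low[of x] by (simp add: Lc_low)
  qed (use y0_y1 y1_N in \<open>simp add: Lc_high Nc_def\<close>)
  have "col x < N - 1"
    using col_less[of x "Nc - 1"] col_low[of x] x Nc_bounds y0_y1 y1_N
    by (cases "Nc - 1 \<le> y0") (auto simp: Nc_def)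
  then show ?thesis using same_label compass_top_A[OF G] by simp
qed

lemma Lc_compass: "compass \<phi> Nc Lc"
  using Lc_atom Lc_cons_A Lc_cons_B Lc_ful_B Lc_ful_Bbar Lc_top_A by (rule compassI)

(* If \<phi> holds on the leftmost column above y0, it is a Bbar-request of (0, y0)
   and hence reappears in the contracted structure. *)
lemma Lc_features:
  assumes "0 < y0" "0 < y" "y < N" "dnorm \<phi> \<in> L (0, y)"
  shows "features Nc Lc \<phi>"
proof (cases "y \<le> y0")
  case True
  then show ?thesis using assms Nc_bounds unfolding features_def
    by (intro bexI[of _ "(0, y)"]) (auto simp: PN_def Lc_low)
next
  case False
  have "leadsto_B \<phi> (L (0, y)) (L (0, y0))" using compass_B[OF G, of 0 y0 y] False assms by simp
  then have "dnorm \<phi> \<in> Req \<phi> RBbar (L (0, y0))"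
    using assms dnorm_in_Cl unfolding leadsto_B_def obs_def by auto
  then obtain e where "y0 < e" "e < Nc" "dnorm \<phi> \<in> obs \<phi> (Lc (0, e))"
    using Lc_ful_Bbar_at_y0 assms by auto
  then show ?thesis unfolding features_def obs_def by (intro bexI[of _ "(0, e)"]) (auto simp: PN_def)
qed

end

theorem lemma2:
  fixes \<phi> :: "'p fm" and N y y0 y1 :: nat and L :: "nat \<times> nat \<Rightarrow> 'p fm set"
  assumes "compass \<phi> N L"
    and "0 < y" and "y < N" and "dnorm \<phi> \<in> L (0, y)"
    and "0 < y0" and "y0 < y1" and "y1 < N"
    and "shading L y0 \<subseteq> shading L y1"
  shows "\<exists>N' L'. N' < N \<and> compass \<phi> N' (L' :: nat \<times> nat \<Rightarrow> 'p fm set) \<and> features N' L' \<phi>"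
proof -
  interpret row_contraction \<phi> N y0 y1 L
    using assms by unfold_locales auto
  have "features Nc Lc \<phi>" using Lc_features assms by blast
  then show ?thesis using Nc_bounds Lc_compass by blast
qed

end
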